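(* Let $G=K_n$ with $n\geq 3$, let $g:A\to B$ be a function with $s=|g(A)|$ satisfying $2<s<n$. If some $n-s+1$ vertices of $A$ have the same image under $g$ (i.e. $|g^{-1}(v)|=n-s+1$ for some $v\in B$), then $fix(F_G)=2n-(s+3)$.
   Context: A set $S\subseteq V(H)$ is a fixing set of a graph $H$ if the only automorphism of $H$ fixing every vertex of $S$ is the identity; $fix(H)$ is the minimum cardinality of a fixing set of $H$. Functigraph: let $G_1,G_2$ be disjoint copies of a connected graph $G$, with $A=V(G_1)$, $B=V(G_2)$, and let $g:A\to B$ be a function. The functigraph $F_G$ has vertex set $A\cup B$ and edge set $E(G_1)\cup E(G_2)\cup\{ug(u):u\in A\}$. *)

theory Defs
  imports Main "HOL-Library.FuncSet"
begin

text \<open>A (simple) graph is given by a vertex set V and a symmetric adjacency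
  predicate E; only adjacencies between vertices of V matter.\<close>

definition is_automorphism :: "'a set \<Rightarrow> ('a \<Rightarrow> 'a \<Rightarrow> bool) \<Rightarrow> ('a \<Rightarrow> 'a) \<Rightarrow> bool" where
  "is_automorphism V E \<sigma> \<longleftrightarrow>
     bij_betw \<sigma> V V \<and> (\<forall>u\<in>V. \<forall>v\<in>V. E u v \<longleftrightarrow> E (\<sigma> u) (\<sigma> v))"

definition fixing_set :: "'a set \<Rightarrow> ('a \<Rightarrow> 'a \<Rightarrow> bool) \<Rightarrow> 'a set \<Rightarrow> bool" where
  "fixing_set V E S \<longleftrightarrow> S \<subseteq> V \<and>
     (\<forall>\<sigma>. is_automorphism V E \<sigma> \<and> (\<forall>x\<in>S. \<sigma> x = x) \<longrightarrow> (\<forall>x\<in>V. \<sigma> x = x))"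

definition fix_num :: "'a set \<Rightarrow> ('a \<Rightarrow> 'a \<Rightarrow> bool) \<Rightarrow> nat" where
  "fix_num V E = (LEAST k. \<exists>S. fixing_set V E S \<and> card S = k)"

text \<open>Functigraph: vertices Inl a (copy G_1, the set A) and Inr b (copy G_2, the set B).\<close>
definition fg_verts :: "'a set \<Rightarrow> ('a + 'a) set" where
  "fg_verts V = Inl ` V \<union> Inr ` V"

fun fg_edge :: "('a \<Rightarrow> 'a \<Rightarrow> bool) \<Rightarrow> ('a \<Rightarrow> 'a) \<Rightarrow> 'a + 'a \<Rightarrow> 'a + 'a \<Rightarrow> bool" where
  "fg_edge E g (Inl a) (Inl b) = E a b"
| "fg_edge E g (Inr a) (Inr b) = E a b"
| "fg_edge E g (Inl a) (Inr b) = (g a = b)"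
| "fg_edge E g (Inr b) (Inl a) = (g a = b)"

definition K_verts :: "nat \<Rightarrow> nat set" where
  "K_verts n = {0..<n}"

definition K_edge :: "nat \<Rightarrow> nat \<Rightarrow> bool" where
  "K_edge a b \<longleftrightarrow> a \<noteq> b"

end

theory Submission
  imports Defs "HOL-Library.Disjoint_Sets" "HOL-Combinatorics.Transposition"
begin

text \<open>Let \<open>v\<close> be the vertex of \<open>B\<close> with the large fibre \<open>P = g\<^sup>-\<^sup>1(v)\<close>. Since
  \<open>|P| = n - s + 1\<close>, the remaining \<open>s - 1\<close> vertices of \<open>A\<close> are mapped injectively onto
  \<open>W = g(A) - {v}\<close>; let \<open>U = B - g(A)\<close>. The transposition of two vertices of \<open>P\<close>, of two
  vertices of \<open>U\<close>, or of two vertices of \<open>W\<close> together with their preimages is an automorphism, so a fixing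
  set meets all but one of the corresponding "blocks" of each family, which gives
  \<open>(n - s) + (n - s - 1) + (s - 2)\<close> as a lower bound. Conversely, \<open>v\<close> is the unique vertex of
  maximum degree, hence fixed by every automorphism, and then fixing all but one vertex of
  \<open>P\<close>, of \<open>U\<close> and of \<open>W\<close> forces each of these sets, and finally \<open>A - P\<close>, to be fixed pointwise.\<close>

lemma fix_num_eqI:
  assumes "\<exists>S. fixing_set V E S \<and> card S = k"
    and "\<And>S. fixing_set V E S \<Longrightarrow> k \<le> card S"
  shows "fix_num V E = k"
  unfolding fix_num_def using assms by (blast intro: Least_equality)

lemma fixing_setD:
  assumes "fixing_set V E S" "is_automorphism V E \<sigma>" "\<forall>z\<in>S. \<sigma> z = z" "x \<in> V"
  shows "\<sigma> x = x"
  using assms unfolding fixing_set_def by blast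

lemma automorphism_in:
  "is_automorphism V E \<sigma> \<Longrightarrow> x \<in> V \<Longrightarrow> \<sigma> x \<in> V"
  unfolding is_automorphism_def bij_betw_def by blast

lemma automorphism_inj:
  "is_automorphism V E \<sigma> \<Longrightarrow> x \<in> V \<Longrightarrow> y \<in> V \<Longrightarrow> \<sigma> x = \<sigma> y \<Longrightarrow> x = y"
  unfolding is_automorphism_def bij_betw_def by (blast dest: inj_onD)

lemma automorphism_adj_iff:
  "is_automorphism V E \<sigma> \<Longrightarrow> x \<in> V \<Longrightarrow> y \<in> V \<Longrightarrow> E (\<sigma> x) (\<sigma> y) \<longleftrightarrow> E x y"
  unfolding is_automorphism_def by blast

lemma automorphism_adj_fixed_iff:
  "is_automorphism V E \<sigma> \<Longrightarrow> x \<in> V \<Longrightarrow> y \<in> V \<Longrightarrow> \<sigma> x = x \<Longrightarrow> E x (\<sigma> y) \<longleftrightarrow> E x y"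
  by (metis automorphism_adj_iff)

definition degree :: "'a set \<Rightarrow> ('a \<Rightarrow> 'a \<Rightarrow> bool) \<Rightarrow> 'a \<Rightarrow> nat" where
  "degree V E x = card {y \<in> V. E x y}"

lemma degree_automorphism:
  assumes \<sigma>: "is_automorphism V E \<sigma>" and x: "x \<in> V"
  shows "degree V E (\<sigma> x) = degree V E x"
proof -
  have "\<sigma> ` V = V" and "inj_on \<sigma> V"
    using \<sigma> unfolding is_automorphism_def bij_betw_def by auto
  have "\<sigma> ` {y \<in> V. E x y} = {y \<in> V. E (\<sigma> x) y}"
  proof
    show "\<sigma> ` {y \<in> V. E x y} \<subseteq> {y \<in> V. E (\<sigma> x) y}"
      using automorphism_in[OF \<sigma>] automorphism_adj_iff[OF \<sigma> x] by auto
    show "{y \<in> V. E (\<sigma> x) y} \<subseteq> \<sigma> ` {y \<in> V. E x y}"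
    proof
      fix z assume z: "z \<in> {y \<in> V. E (\<sigma> x) y}"
      then obtain y where "y \<in> V" "z = \<sigma> y"
        using \<open>\<sigma> ` V = V\<close> by (metis imageE mem_Collect_eq)
      then show "z \<in> \<sigma> ` {y \<in> V. E x y}"
        using z automorphism_adj_iff[OF \<sigma> x] by auto
    qed
  qed
  moreover have "inj_on \<sigma> {y \<in> V. E x y}"
    using \<open>inj_on \<sigma> V\<close> by (rule inj_on_subset) auto
  ultimately show ?thesis
    unfolding degree_def by (metis card_image)
qed

lemma automorphism_fixes_max_degree:
  assumes "is_automorphism V E \<sigma>" "x \<in> V"
    and "\<And>y. y \<in> V \<Longrightarrow> y \<noteq> x \<Longrightarrow> degree V E y < degree V E x"
  shows "\<sigma> x = x"
  using assms degree_automorphism automorphism_in by (metis less_irrefl)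

lemma inj_on_endo_fixing_all_but_one:
  assumes "inj_on \<sigma> T" "\<sigma> ` T \<subseteq> T" "\<forall>x\<in>T - {t}. \<sigma> x = x"
  shows "\<forall>x\<in>T. \<sigma> x = x"
proof (rule ccontr)
  assume "\<not> (\<forall>x\<in>T. \<sigma> x = x)"
  then have t: "t \<in> T" "\<sigma> t \<noteq> t" using assms(3) by auto
  then have "\<sigma> t \<in> T - {t}" using assms(2) by auto
  then have "\<sigma> (\<sigma> t) = \<sigma> t" using assms(3) by blast
  then show False using assms(1) t \<open>\<sigma> t \<in> T - {t}\<close> by (auto dest: inj_onD)
qed

lemma card_le_card_blocks_hit_Suc:
  assumes S: "finite S" and disj: "disjoint_family_on B X"
    and hit: "\<And>x y. x \<in> X \<Longrightarrow> y \<in> X \<Longrightarrow> B x \<inter> S = {} \<Longrightarrow> B y \<inter> S = {} \<Longrightarrow> x = y"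
  shows "card X \<le> card (S \<inter> \<Union>(B ` X)) + 1"
proof (cases "finite X")
  case True
  define Y where "Y = {x \<in> X. B x \<inter> S \<noteq> {}}"
  have "Y \<subseteq> X" by (auto simp: Y_def)
  have "card (X - Y) \<le> Suc 0"
    using True hit by (subst card_le_Suc0_iff_eq) (auto simp: Y_def)
  have "\<forall>x\<in>Y. \<exists>z. z \<in> B x \<inter> S"
    by (auto simp: Y_def)
  then obtain c where c: "\<forall>x\<in>Y. c x \<in> B x \<inter> S"
    by (metis bchoice)
  have "inj_on c Y"
  proof (rule inj_onI)
    fix x y assume "x \<in> Y" "y \<in> Y" "c x = c y"
    then have "c x \<in> B x \<inter> B y" using c by auto
    then show "x = y" using disj \<open>x \<in> Y\<close> \<open>y \<in> Y\<close>
      unfolding disjoint_family_on_def Y_def by blast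
  qed
  moreover have "c ` Y \<subseteq> S \<inter> \<Union>(B ` X)"
    using c by (auto simp: Y_def)
  ultimately have "card Y \<le> card (S \<inter> \<Union>(B ` X))"
    using S by (intro card_inj_on_le) auto
  moreover have "card X = card Y + card (X - Y)"
    using True \<open>Y \<subseteq> X\<close> by (metis card_Diff_subset card_mono finite_subset le_add_diff_inverse)
  ultimately show ?thesis using \<open>card (X - Y) \<le> Suc 0\<close> by linarith
qed simp

lemma fg_verts_iff [simp]:
  "Inl a \<in> fg_verts V \<longleftrightarrow> a \<in> V" "Inr b \<in> fg_verts V \<longleftrightarrow> b \<in> V"
  by (auto simp: fg_verts_def)

lemma is_automorphism_map_sum:
  assumes f: "is_automorphism V E f" and h: "is_automorphism V E h" and g: "g \<in> V \<rightarrow> V"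
    and comm: "\<And>a. a \<in> V \<Longrightarrow> g (f a) = h (g a)"
  shows "is_automorphism (fg_verts V) (fg_edge E g) (map_sum f h)"
proof -
  have inj: "inj_on f V" "inj_on h V" and onto: "f ` V = V" "h ` V = V"
    using f h unfolding is_automorphism_def bij_betw_def by auto
  have "inj_on (map_sum f h) (fg_verts V)" (is ?inj)
  proof (rule inj_onI)
    fix x y assume "x \<in> fg_verts V" "y \<in> fg_verts V" "map_sum f h x = map_sum f h y"
    then show "x = y"
      using inj by (cases x; cases y) (auto dest: inj_onD)
  qed
  have "map_sum f h ` fg_verts V = Inl ` (f ` V) \<union> Inr ` (h ` V)"
    by (simp add: fg_verts_def image_Un image_image)
  then have onto_fg: "map_sum f h ` fg_verts V = fg_verts V"
    using onto by (simp add: fg_verts_def)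
  have edges: "fg_edge E g (map_sum f h x) (map_sum f h y) \<longleftrightarrow> fg_edge E g x y"
    if "x \<in> fg_verts V" "y \<in> fg_verts V" for x y
  proof (cases x; cases y)
    fix a b assume "x = Inl a" "y = Inr b"
    then show ?thesis
      using that g comm automorphism_inj[OF h, of "g a" b] by auto
  next
    fix a b assume "x = Inr a" "y = Inl b"
    then show ?thesis
      using that g comm automorphism_inj[OF h, of "g b" a] by auto
  qed (use that automorphism_adj_iff[OF f] automorphism_adj_iff[OF h] in auto)
  show ?thesis
    unfolding is_automorphism_def bij_betw_def
  proof (intro conjI ballI)
    fix x y assume "x \<in> fg_verts V" "y \<in> fg_verts V"
    then show "fg_edge E g x y \<longleftrightarrow> fg_edge E g (map_sum f h x) (map_sum f h y)"
      by (rule edges[symmetric])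
  qed fact+
qed

lemma is_automorphism_K_edge:
  "bij_betw f V V \<Longrightarrow> is_automorphism V K_edge f"
  unfolding is_automorphism_def K_edge_def bij_betw_def by (auto simp: inj_on_eq_iff)

lemma degree_fg_K_edge_Inl:
  assumes "finite V" "a \<in> V" "g \<in> V \<rightarrow> V"
  shows "degree (fg_verts V) (fg_edge K_edge g) (Inl a) = card V"
proof -
  have "{y \<in> fg_verts V. fg_edge K_edge g (Inl a) y} = insert (Inr (g a)) (Inl ` (V - {a}))"
    using assms by (auto simp: fg_verts_def K_edge_def)
  moreover have "card V > 0"
    using assms card_gt_0_iff by blast
  then have "card (insert (Inr (g a)) (Inl ` (V - {a}))) = card V"
    using assms by (simp add: card_image image_iff)
  ultimately show ?thesis
    unfolding degree_def by simp
qed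

lemma degree_fg_K_edge_Inr:
  assumes "finite V" "b \<in> V"
  shows "degree (fg_verts V) (fg_edge K_edge g) (Inr b) = card V - 1 + card {a \<in> V. g a = b}"
proof -
  have "{y \<in> fg_verts V. fg_edge K_edge g (Inr b) y} = Inr ` (V - {b}) \<union> Inl ` {a \<in> V. g a = b}"
    by (auto simp: fg_verts_def K_edge_def)
  moreover have "card (Inr ` (V - {b}) \<union> Inl ` {a \<in> V. g a = b}) = card V - 1 + card {a \<in> V. g a = b}"
    using assms by (subst card_Un_disjoint) (auto simp: card_image)
  ultimately show ?thesis
    unfolding degree_def by simp
qed

locale Kn_functigraph =
  fixes n s :: nat and g :: "nat \<Rightarrow> nat" and v :: nat
  assumes g_into: "g \<in> K_verts n \<rightarrow> K_verts n"
    and s_eq: "s = card (g ` K_verts n)"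
    and s_gt_2: "2 < s" and s_lt_n: "s < n"
    and v_in: "v \<in> K_verts n"
    and card_fibre_v: "card {a \<in> K_verts n. g a = v} = n - s + 1"
begin

abbreviation "V \<equiv> K_verts n"
abbreviation "VV \<equiv> fg_verts V"
abbreviation "E \<equiv> fg_edge K_edge g"

definition "P = {a \<in> V. g a = v}"
definition "W = g ` V - {v}"
definition "U = V - g ` V"

lemma finite_V: "finite V" and card_V: "card V = n"
  by (simp_all add: K_verts_def)

lemma g_in: "a \<in> V \<Longrightarrow> g a \<in> V"
  using g_into by auto

lemma card_P: "card P = n - s + 1"
  using card_fibre_v by (simp add: P_def)

lemma P_subset: "P \<subseteq> V" and W_subset: "W \<subseteq> V" and U_subset: "U \<subseteq> V"
  using g_into by (auto simp: P_def W_def U_def)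

lemma finite_P: "finite P" and finite_W: "finite W" and finite_U: "finite U"
  using finite_V P_subset W_subset U_subset by (auto intro: finite_subset)

lemma U_W_disjoint: "U \<inter> W = {}"
  by (auto simp: U_def W_def)

lemma v_in_image: "v \<in> g ` V"
proof -
  have "P \<noteq> {}"
    using card_P by auto
  then show ?thesis
    by (auto simp: P_def)
qed

lemma card_W: "card W = s - 1"
  using v_in_image s_eq finite_V by (simp add: W_def)

lemma card_U: "card U = n - s"
proof -
  have "card U = card V - card (g ` V)"
    unfolding U_def using finite_V g_into by (intro card_Diff_subset) auto
  then show ?thesis
    using card_V s_eq by simp
qed

lemma image_outside_P: "g ` (V - P) = W"
  by (auto simp: P_def W_def)

lemma inj_on_outside_P: "inj_on g (V - P)"
proof -
  have "card (V - P) = s - 1"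
    using card_Diff_subset[OF finite_P P_subset] card_V card_P s_lt_n by simp
  then show ?thesis
    using finite_V card_W image_outside_P by (simp add: eq_card_imp_inj_on)
qed

lemma g_eq_imp_eq:
  assumes "a \<in> V" "b \<in> V" "g a = g b" "g a \<noteq> v"
  shows "a = b"
proof -
  have "a \<in> V - P" "b \<in> V - P"
    using assms by (auto simp: P_def)
  then show ?thesis
    using inj_onD[OF inj_on_outside_P assms(3)] by blast
qed

lemma card_fibre_le_1:
  assumes "b \<noteq> v"
  shows "card {a \<in> V. g a = b} \<le> 1"
proof -
  have "\<forall>x\<in>{a \<in> V. g a = b}. \<forall>y\<in>{a \<in> V. g a = b}. x = y"
    using g_eq_imp_eq assms by auto
  then show ?thesis
    using card_le_Suc0_iff_eq[of "{a \<in> V. g a = b}"] finite_V by simp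
qed

definition pre :: "nat \<Rightarrow> nat" where
  "pre = inv_into (V - P) g"

lemma pre_in: "w \<in> W \<Longrightarrow> pre w \<in> V - P"
  unfolding pre_def image_outside_P[symmetric] by (rule inv_into_into)

lemma g_pre: "w \<in> W \<Longrightarrow> g (pre w) = w"
  unfolding pre_def image_outside_P[symmetric] by (rule f_inv_into_f)

lemma automorphism_swap_P:
  assumes "p \<in> P" "q \<in> P"
  shows "is_automorphism VV E (map_sum (Transposition.transpose p q) id)"
proof (rule is_automorphism_map_sum[OF is_automorphism_K_edge is_automorphism_K_edge g_into])
  show "bij_betw (Transposition.transpose p q) V V"
    using assms P_subset by (intro bij_betw_transpose_iff) auto
  show "g (Transposition.transpose p q a) = id (g a)" for a
    using assms by (cases "a = p \<or> a = q") (auto simp: P_def transpose_def)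
qed simp

lemma automorphism_swap_U:
  assumes "u \<in> U" "u' \<in> U"
  shows "is_automorphism VV E (map_sum id (Transposition.transpose u u'))"
proof (rule is_automorphism_map_sum[OF is_automorphism_K_edge is_automorphism_K_edge g_into])
  show "bij_betw (Transposition.transpose u u') V V"
    using assms U_subset by (intro bij_betw_transpose_iff) auto
  show "g (id a) = Transposition.transpose u u' (g a)" if "a \<in> V" for a
    using assms that by (auto simp: U_def transpose_def)
qed simp

lemma automorphism_swap_W:
  assumes w: "w \<in> W" and w': "w' \<in> W"
  shows "is_automorphism VV E (map_sum (Transposition.transpose (pre w) (pre w')) (Transposition.transpose w w'))"
proof (rule is_automorphism_map_sum[OF is_automorphism_K_edge is_automorphism_K_edge g_into])
  show "bij_betw (Transposition.transpose (pre w) (pre w')) V V"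
    using pre_in[OF w] pre_in[OF w'] by (intro bij_betw_transpose_iff) auto
  show "bij_betw (Transposition.transpose w w') V V"
    using w w' W_subset by (intro bij_betw_transpose_iff) auto
  show "g (Transposition.transpose (pre w) (pre w') a) = Transposition.transpose w w' (g a)"
    if "a \<in> V" for a
  proof -
    have "w \<noteq> v" "w' \<noteq> v"
      using w w' by (auto simp: W_def)
    then have "g a = w \<longleftrightarrow> a = pre w" "g a = w' \<longleftrightarrow> a = pre w'"
      using that pre_in[OF w] g_pre[OF w] pre_in[OF w'] g_pre[OF w'] g_eq_imp_eq[of a] by auto
    then show ?thesis
      using g_pre[OF w] g_pre[OF w'] by (auto simp: transpose_def)
  qed
qed

lemma fixing_set_meets_P:
  assumes S: "fixing_set VV E S" and pq: "p \<in> P" "q \<in> P" and "Inl p \<notin> S" "Inl q \<notin> S"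
  shows "p = q"
proof -
  let ?\<tau> = "map_sum (Transposition.transpose p q) (id :: nat \<Rightarrow> nat)"
  have "\<forall>z\<in>S. ?\<tau> z = z"
  proof
    fix z assume "z \<in> S"
    then show "?\<tau> z = z"
      using assms(4,5) by (cases z) (auto simp: transpose_def)
  qed
  then have "?\<tau> (Inl p) = Inl p"
    by (rule fixing_setD[OF S automorphism_swap_P[OF pq]]) (use pq P_subset in auto)
  then show ?thesis by simp
qed

lemma fixing_set_meets_U:
  assumes S: "fixing_set VV E S" and uu': "u \<in> U" "u' \<in> U" and "Inr u \<notin> S" "Inr u' \<notin> S"
  shows "u = u'"
proof -
  let ?\<tau> = "map_sum (id :: nat \<Rightarrow> nat) (Transposition.transpose u u')"
  have "\<forall>z\<in>S. ?\<tau> z = z"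
  proof
    fix z assume "z \<in> S"
    then show "?\<tau> z = z"
      using assms(4,5) by (cases z) (auto simp: transpose_def)
  qed
  then have "?\<tau> (Inr u) = Inr u"
    by (rule fixing_setD[OF S automorphism_swap_U[OF uu']]) (use uu' U_subset in auto)
  then show ?thesis by simp
qed

lemma fixing_set_meets_W:
  assumes S: "fixing_set VV E S" and ww': "w \<in> W" "w' \<in> W"
    and "Inr w \<notin> S" "Inr w' \<notin> S" "Inl (pre w) \<notin> S" "Inl (pre w') \<notin> S"
  shows "w = w'"
proof -
  let ?\<tau> = "map_sum (Transposition.transpose (pre w) (pre w')) (Transposition.transpose w w')"
  have "\<forall>z\<in>S. ?\<tau> z = z"
  proof
    fix z assume "z \<in> S"
    then show "?\<tau> z = z"
      using assms(4-7) by (cases z) (auto simp: transpose_def)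
  qed
  then have "?\<tau> (Inr w) = Inr w"
    by (rule fixing_setD[OF S automorphism_swap_W[OF ww']]) (use ww' W_subset in auto)
  then show ?thesis by simp
qed

lemma card_fixing_set_ge:
  assumes S: "fixing_set VV E S"
  shows "2 * n - (s + 3) \<le> card S"
proof -
  have "finite S"
    using S finite_V unfolding fixing_set_def fg_verts_def by (auto intro: finite_subset)
  define SP where "SP = S \<inter> (\<Union>p\<in>P. {Inl p})"
  define SU where "SU = S \<inter> (\<Union>u\<in>U. {Inr u})"
  define SW where "SW = S \<inter> (\<Union>w\<in>W. {Inr w, Inl (pre w)})"
  have "card P \<le> card SP + 1"
    unfolding SP_def using \<open>finite S\<close>
    by (rule card_le_card_blocks_hit_Suc) (auto simp: disjoint_family_on_def intro: fixing_set_meets_P[OF S])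
  moreover have "card U \<le> card SU + 1"
    unfolding SU_def using \<open>finite S\<close>
    by (rule card_le_card_blocks_hit_Suc) (auto simp: disjoint_family_on_def intro: fixing_set_meets_U[OF S])
  moreover have "card W \<le> card SW + 1"
    unfolding SW_def using \<open>finite S\<close>
  proof (rule card_le_card_blocks_hit_Suc)
    show "disjoint_family_on (\<lambda>w. {Inr w, Inl (pre w)}) W"
      unfolding disjoint_family_on_def using g_pre by auto metis
  qed (auto intro: fixing_set_meets_W[OF S])
  moreover have "card SP + card SU + card SW \<le> card S"
  proof -
    have "SP \<inter> SU = {}" "(SP \<union> SU) \<inter> SW = {}"
      using U_W_disjoint pre_in by (auto simp: SP_def SU_def SW_def)
    moreover have "finite SP" "finite SU" "finite SW"
      using \<open>finite S\<close> by (auto simp: SP_def SU_def SW_def)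
    ultimately have "card (SP \<union> SU \<union> SW) = card SP + card SU + card SW"
      by (simp add: card_Un_disjoint)
    moreover have "card (SP \<union> SU \<union> SW) \<le> card S"
      using \<open>finite S\<close> by (intro card_mono) (auto simp: SP_def SU_def SW_def)
    ultimately show ?thesis by simp
  qed
  ultimately show ?thesis
    using card_P card_U card_W s_gt_2 s_lt_n by linarith
qed

end

locale Kn_functigraph_automorphism = Kn_functigraph +
  fixes \<sigma> :: "nat + nat \<Rightarrow> nat + nat"
  assumes automorphism: "is_automorphism VV E \<sigma>"
begin

lemma \<sigma>_in: "x \<in> VV \<Longrightarrow> \<sigma> x \<in> VV"
  by (rule automorphism_in[OF automorphism])

lemma \<sigma>_inj: "x \<in> VV \<Longrightarrow> y \<in> VV \<Longrightarrow> \<sigma> x = \<sigma> y \<Longrightarrow> x = y"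
  by (rule automorphism_inj[OF automorphism])

lemma adj_fixed_iff: "x \<in> VV \<Longrightarrow> y \<in> VV \<Longrightarrow> \<sigma> x = x \<Longrightarrow> E x (\<sigma> y) \<longleftrightarrow> E x y"
  by (rule automorphism_adj_fixed_iff[OF automorphism])

lemma fixes_Inr_v: "\<sigma> (Inr v) = Inr v"
proof (rule automorphism_fixes_max_degree[OF automorphism])
  show "Inr v \<in> VV" using v_in by simp
  have deg_v: "degree VV E (Inr v) = n - 1 + (n - s + 1)"
    using degree_fg_K_edge_Inr[OF finite_V v_in] card_V card_fibre_v by simp
  fix y assume "y \<in> VV" "y \<noteq> Inr v"
  then consider a where "y = Inl a" "a \<in> V" | b where "y = Inr b" "b \<in> V" "b \<noteq> v"
    by (auto simp: fg_verts_def)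
  then show "degree VV E y < degree VV E (Inr v)"
  proof cases
    case 1
    then show ?thesis
      using degree_fg_K_edge_Inl[OF finite_V _ g_into] card_V deg_v s_lt_n by simp
  next
    case 2
    then show ?thesis
      using degree_fg_K_edge_Inr[OF finite_V] card_fibre_le_1 card_V deg_v s_lt_n by fastforce
  qed
qed

lemma Inl_P_closed:
  assumes p1: "p1 \<in> P" "\<sigma> (Inl p1) = Inl p1" and p: "p \<in> P"
  shows "\<sigma> (Inl p) \<in> Inl ` P"
proof (cases "p = p1")
  case False
  have in_VV: "Inr v \<in> VV" "Inl p1 \<in> VV" "Inl p \<in> VV" "\<sigma> (Inl p) \<in> VV"
    using v_in p1 p P_subset \<sigma>_in by auto
  have "E (Inr v) (\<sigma> (Inl p))" "E (Inl p1) (\<sigma> (Inl p))"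
    using adj_fixed_iff[OF _ _ fixes_Inr_v] adj_fixed_iff[OF _ _ p1(2)] in_VV p p1 False
    by (auto simp: P_def K_edge_def)
  then show ?thesis
    using in_VV p1 by (cases "\<sigma> (Inl p)") (auto simp: P_def K_edge_def)
qed (use p1 in simp)

lemma Inl_outside_P_closed:
  assumes a: "a \<in> V - P"
  shows "\<sigma> (Inl a) \<in> Inl ` (V - P)"
proof -
  have in_VV: "Inr v \<in> VV" "Inl a \<in> VV" "\<sigma> (Inl a) \<in> VV"
    using v_in a \<sigma>_in by auto
  have "\<not> E (Inr v) (\<sigma> (Inl a))"
    using adj_fixed_iff[OF _ _ fixes_Inr_v] in_VV a by (auto simp: P_def)
  moreover have "\<sigma> (Inl a) \<noteq> Inr v"
    using \<sigma>_inj[OF in_VV(2,1)] fixes_Inr_v by auto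
  ultimately show ?thesis
    using in_VV by (cases "\<sigma> (Inl a)") (auto simp: P_def K_edge_def)
qed

lemma Inr_closed:
  assumes fixes_P: "\<forall>p\<in>P. \<sigma> (Inl p) = Inl p" and b: "b \<in> V" "b \<noteq> v"
  shows "\<sigma> (Inr b) \<in> Inr ` (V - {v})"
proof -
  have in_VV: "Inr v \<in> VV" "Inr b \<in> VV" "\<sigma> (Inr b) \<in> VV"
    using v_in b \<sigma>_in by auto
  have "E (Inr v) (\<sigma> (Inr b))"
    using adj_fixed_iff[OF _ _ fixes_Inr_v] in_VV b by (auto simp: K_edge_def)
  moreover have "\<sigma> (Inr b) \<noteq> Inl p" if "p \<in> P" for p
    using \<sigma>_inj[OF in_VV(2), of "Inl p"] fixes_P that P_subset by auto
  ultimately show ?thesis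
    using in_VV by (cases "\<sigma> (Inr b)") (auto simp: P_def K_edge_def)
qed

lemma Inr_W_closed:
  assumes fixes_P: "\<forall>p\<in>P. \<sigma> (Inl p) = Inl p" and w: "w \<in> W"
  shows "\<sigma> (Inr w) \<in> Inr ` W"
proof -
  obtain a' where a': "a' \<in> V - P" "\<sigma> (Inl (pre w)) = Inl a'"
    using Inl_outside_P_closed[OF pre_in[OF w]] by blast
  obtain b' where b': "b' \<in> V - {v}" "\<sigma> (Inr w) = Inr b'"
    using Inr_closed[OF fixes_P] w W_subset by (auto simp: W_def)
  have "E (\<sigma> (Inl (pre w))) (\<sigma> (Inr w))"
    using automorphism_adj_iff[OF automorphism, of "Inl (pre w)" "Inr w"] pre_in[OF w] w W_subset g_pre[OF w]
    by auto
  then have "g a' = b'"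
    using a' b' by simp
  then show ?thesis
    using a' b' by (auto simp: W_def)
qed

lemma Inr_U_closed:
  assumes fixes_W: "\<forall>w\<in>W. \<sigma> (Inr w) = Inr w" and fixes_P: "\<forall>p\<in>P. \<sigma> (Inl p) = Inl p"
    and u: "u \<in> U"
  shows "\<sigma> (Inr u) \<in> Inr ` U"
proof -
  obtain b' where b': "b' \<in> V - {v}" "\<sigma> (Inr u) = Inr b'"
    using Inr_closed[OF fixes_P] u U_subset v_in_image by (auto simp: U_def)
  have "b' \<notin> W"
  proof
    assume "b' \<in> W"
    then have "\<sigma> (Inr b') = \<sigma> (Inr u)"
      using fixes_W b' by simp
    then have "b' = u"
      using \<sigma>_inj[of "Inr b'" "Inr u"] b' u U_subset by auto
    then show False
      using \<open>b' \<in> W\<close> u U_W_disjoint by blast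
  qed
  then show ?thesis
    using b' by (auto simp: U_def W_def)
qed

lemma Inl_fixed_if_Inr_fixed:
  assumes fixes_Inr: "\<forall>b\<in>V. \<sigma> (Inr b) = Inr b" and a: "a \<in> V - P"
  shows "\<sigma> (Inl a) = Inl a"
proof -
  obtain a' where a': "a' \<in> V - P" "\<sigma> (Inl a) = Inl a'"
    using Inl_outside_P_closed[OF a] by blast
  have "E (\<sigma> (Inl a)) (\<sigma> (Inr (g a)))"
    using automorphism_adj_iff[OF automorphism, of "Inl a" "Inr (g a)"] a g_in by auto
  then have "g a' = g a"
    using a' fixes_Inr a g_in by simp
  then show ?thesis
    using a a' g_eq_imp_eq by (auto simp: P_def)
qed

lemma identity_if_fixes_all_but_one:
  assumes p1: "p1 \<in> P" "p1 \<noteq> p0"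
    and fixes_P: "\<forall>p\<in>P - {p0}. \<sigma> (Inl p) = Inl p"
    and fixes_U: "\<forall>u\<in>U - {u0}. \<sigma> (Inr u) = Inr u"
    and fixes_W: "\<forall>w\<in>W - {w0}. \<sigma> (Inr w) = Inr w"
  shows "\<forall>x\<in>VV. \<sigma> x = x"
proof -
  have inj: "inj_on \<sigma> T" if "T \<subseteq> VV" for T
    using automorphism that unfolding is_automorphism_def bij_betw_def by (auto intro: inj_on_subset)
  have "\<forall>x\<in>Inl ` P. \<sigma> x = x"
  proof (rule inj_on_endo_fixing_all_but_one[OF inj])
    show "Inl ` P \<subseteq> VV" using P_subset by auto
    show "\<sigma> ` Inl ` P \<subseteq> Inl ` P" using Inl_P_closed[of p1] p1 fixes_P by auto
    show "\<forall>x\<in>Inl ` P - {Inl p0}. \<sigma> x = x" using fixes_P by auto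
  qed
  then have fixes_P': "\<forall>p\<in>P. \<sigma> (Inl p) = Inl p" by simp
  have "\<forall>x\<in>Inr ` W. \<sigma> x = x"
  proof (rule inj_on_endo_fixing_all_but_one[OF inj])
    show "Inr ` W \<subseteq> VV" using W_subset by auto
    show "\<sigma> ` Inr ` W \<subseteq> Inr ` W" using Inr_W_closed[OF fixes_P'] by auto
    show "\<forall>x\<in>Inr ` W - {Inr w0}. \<sigma> x = x" using fixes_W by auto
  qed
  then have fixes_W': "\<forall>w\<in>W. \<sigma> (Inr w) = Inr w" by simp
  have "\<forall>x\<in>Inr ` U. \<sigma> x = x"
  proof (rule inj_on_endo_fixing_all_but_one[OF inj])
    show "Inr ` U \<subseteq> VV" using U_subset by auto
    show "\<sigma> ` Inr ` U \<subseteq> Inr ` U" using Inr_U_closed[OF fixes_W' fixes_P'] by auto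
    show "\<forall>x\<in>Inr ` U - {Inr u0}. \<sigma> x = x" using fixes_U by auto
  qed
  then have fixes_Inr: "\<forall>b\<in>V. \<sigma> (Inr b) = Inr b"
    using fixes_Inr_v fixes_W' by (auto simp: U_def W_def)
  show ?thesis
  proof
    fix x assume "x \<in> VV"
    then show "\<sigma> x = x"
      using fixes_P' fixes_Inr Inl_fixed_if_Inr_fixed[OF fixes_Inr] by (cases x) auto
  qed
qed

end

context Kn_functigraph
begin

lemma exists_fixing_set_card: "\<exists>S. fixing_set VV E S \<and> card S = 2 * n - (s + 3)"
proof -
  obtain p0 p1 where p: "p0 \<in> P" "p1 \<in> P" "p1 \<noteq> p0"
  proof -
    have "\<not> card P \<le> Suc 0"
      using card_P s_lt_n by simp
    then show ?thesis
      using that card_le_Suc0_iff_eq[OF finite_P] by blast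
  qed
  obtain u0 where u0: "u0 \<in> U"
    using card_U s_lt_n by fastforce
  obtain w0 where w0: "w0 \<in> W"
    using card_W s_gt_2 by fastforce
  define S0 where "S0 = Inl ` (P - {p0}) \<union> Inr ` (U - {u0}) \<union> Inr ` (W - {w0})"
  have "card S0 = (n - s) + (n - s - 1) + (s - 2)"
    unfolding S0_def using p u0 w0 card_P card_U card_W U_W_disjoint finite_P finite_U finite_W
    by (subst card_Un_disjoint; auto simp: card_image)+
  moreover have "fixing_set VV E S0"
    unfolding fixing_set_def
  proof (intro conjI allI impI)
    show "S0 \<subseteq> VV"
      using P_subset U_subset W_subset by (auto simp: S0_def)
    fix \<sigma> assume \<sigma>: "is_automorphism VV E \<sigma> \<and> (\<forall>x\<in>S0. \<sigma> x = x)"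
    interpret Kn_functigraph_automorphism n s g v \<sigma>
      by (rule Kn_functigraph_automorphism.intro[OF Kn_functigraph_axioms]) (unfold_locales, use \<sigma> in blast)
    show "\<forall>x\<in>VV. \<sigma> x = x"
      by (rule identity_if_fixes_all_but_one[of p1 p0 u0 w0]) (use p \<sigma> in \<open>auto simp: S0_def\<close>)
  qed
  moreover have "(n - s) + (n - s - 1) + (s - 2) = 2 * n - (s + 3)"
    using s_gt_2 s_lt_n by simp
  ultimately show ?thesis
    by metis
qed

end

theorem corollary3p3:
  fixes n s :: nat and g :: "nat \<Rightarrow> nat"
  assumes "n \<ge> 3"
    and "g \<in> K_verts n \<rightarrow> K_verts n"
    and "s = card (g ` K_verts n)"
    and "2 < s" and "s < n"
    and "\<exists>v\<in>K_verts n. card {a \<in> K_verts n. g a = v} = n - s + 1"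
  shows "fix_num (fg_verts (K_verts n)) (fg_edge K_edge g) = 2 * n - (s + 3)"
proof -
  obtain v where "v \<in> K_verts n" "card {a \<in> K_verts n. g a = v} = n - s + 1"
    using assms(6) by blast
  then interpret Kn_functigraph n s g v
    using assms(2-5) by unfold_locales
  show ?thesis
    using exists_fixing_set_card card_fixing_set_ge by (rule fix_num_eqI)
qed

end
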